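(* Let $\Gamma$ be a distance-regular graph with intersection array $\{b_0,b_1,\dots,b_{D-1};c_1,\dots,c_D\}$ and let $(u_{ij})$ be the generators of $C(G_{aut}^+(\Gamma))$. Let $2\le m\le D$ with $c_m\ge 2$, and assume $u_{ij}u_{kl}=u_{kl}u_{ij}$ for all vertices $i,j,k,l$ with $d(i,k)=d(j,l)=m-1$. If one of the following holds: (a) $c_2=1$ and $b_1+1=b_0$; (b) $c_2=1$ and $b_1+2=b_0$; (c) $c_2=2$, $m=2$ and $b_1+3=b_0$; then $u_{ij}u_{kl}=u_{kl}u_{ij}$ for all $i,j,k,l$ with $d(i,k)=d(j,l)=m$.
   Context: A connected regular graph $\Gamma=(V,E)$ of diameter $D$ is distance-regular with intersection array $\{b_0,\dots,b_{D-1};c_1,\dots,c_D\}$ if for any vertices $v,w$ with $d(v,w)=i$, exactly $b_i$ neighbors of $w$ are at distance $i+1$ from $v$ and exactly $c_i$ neighbors of $w$ are at distance $i-1$ from $v$ ($d$ the graph distance). $C(G_{aut}^+(\Gamma))$ is the universal unital $C^*$-algebra generated by $u_{ij}$, $i,j\in V=\{1,\dots,n\}$, with relations: (R1) $u_{ij}=u_{ij}^*=u_{ij}^2$; (R2) $\sum_{l} u_{il}=1=\sum_{l} u_{li}$ for all $i$; (R3) $u_{ij}u_{kl}=u_{kl}u_{ij}=0$ whenever exactly one of $(i,k)\in E$, $(j,l)\in E$ holds. *)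

theory Defs
  imports Complex_Main
begin

class unital_cstar_algebra = real_normed_algebra_1 + banach +
  fixes scaleC :: "complex \<Rightarrow> 'a \<Rightarrow> 'a"
    and adj :: "'a \<Rightarrow> 'a"
  assumes scaleC_add_right: "scaleC c (x + y) = scaleC c x + scaleC c y"
    and scaleC_add_left: "scaleC (c + d) x = scaleC c x + scaleC d x"
    and scaleC_scaleC: "scaleC c (scaleC d x) = scaleC (c * d) x"
    and scaleC_one: "scaleC 1 x = x"
    and scaleR_scaleC: "scaleR r x = scaleC (complex_of_real r) x"
    and norm_scaleC: "norm (scaleC c x) = cmod c * norm x"
    and mult_scaleC_left: "scaleC c x * y = scaleC c (x * y)"
    and mult_scaleC_right: "x * scaleC c y = scaleC c (x * y)"
    and adj_adj: "adj (adj x) = x"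
    and adj_add: "adj (x + y) = adj x + adj y"
    and adj_scaleC: "adj (scaleC c x) = scaleC (cnj c) (adj x)"
    and adj_mult: "adj (x * y) = adj y * adj x"
    and cstar_identity: "norm (adj x * x) = (norm x)\<^sup>2"

definition gdist :: "('v \<Rightarrow> 'v \<Rightarrow> bool) \<Rightarrow> 'v \<Rightarrow> 'v \<Rightarrow> nat" where
  "gdist E v w = (LEAST n. (E ^^ n) v w)"

definition simple_graph :: "('v \<Rightarrow> 'v \<Rightarrow> bool) \<Rightarrow> bool" where
  "simple_graph E \<longleftrightarrow> (\<forall>v w. E v w \<longrightarrow> E w v) \<and> (\<forall>v. \<not> E v v)"

definition connected_graph :: "('v \<Rightarrow> 'v \<Rightarrow> bool) \<Rightarrow> bool" where
  "connected_graph E \<longleftrightarrow> (\<forall>v w. \<exists>n. (E ^^ n) v w)"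

definition regular_graph :: "('v::finite \<Rightarrow> 'v \<Rightarrow> bool) \<Rightarrow> bool" where
  "regular_graph E \<longleftrightarrow> (\<exists>k. \<forall>v. card {w. E v w} = k)"

definition diameter :: "('v::finite \<Rightarrow> 'v \<Rightarrow> bool) \<Rightarrow> nat" where
  "diameter E = Max {gdist E v w | v w. True}"

definition distance_regular ::
  "('v::finite \<Rightarrow> 'v \<Rightarrow> bool) \<Rightarrow> nat \<Rightarrow> (nat \<Rightarrow> nat) \<Rightarrow> (nat \<Rightarrow> nat) \<Rightarrow> bool" where
  "distance_regular E D b c \<longleftrightarrow>
     simple_graph E \<and> connected_graph E \<and> regular_graph E \<and> diameter E = D \<and>
     (\<forall>v w. \<forall>i<D. gdist E v w = i \<longrightarrow> card {x. E w x \<and> gdist E v x = i + 1} = b i) \<and>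
     (\<forall>v w. \<forall>i. 1 \<le> i \<and> i \<le> D \<and> gdist E v w = i \<longrightarrow>
        card {x. E w x \<and> gdist E v x = i - 1} = c i)"

definition qaut_relations ::
  "('v::finite \<Rightarrow> 'v \<Rightarrow> bool) \<Rightarrow> ('v \<Rightarrow> 'v \<Rightarrow> 'a::unital_cstar_algebra) \<Rightarrow> bool" where
  "qaut_relations E u \<longleftrightarrow>
     (\<forall>i j. adj (u i j) = u i j \<and> u i j * u i j = u i j) \<and>
     (\<forall>i. (\<Sum>l\<in>UNIV. u i l) = 1 \<and> (\<Sum>l\<in>UNIV. u l i) = 1) \<and>
     (\<forall>i j k l. (E i k \<noteq> E j l) \<longrightarrow> u i j * u k l = 0 \<and> u k l * u i j = 0)"

end

theory Submission
  imports Defs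
begin

text \<open>Let \<open>d(i,k) = d(j,l) = m\<close>. As \<open>c\<^sub>m \<ge> 2\<close>, the vertex \<open>k\<close> has two neighbours \<open>p \<noteq> p'\<close> at
  distance \<open>m - 1\<close> from \<open>i\<close>, and the conditions on the intersection array leave \<open>k\<close> and (only if
  \<open>m = 2\<close>) \<open>i\<close> as the only common neighbours of \<open>p\<close> and \<open>p'\<close>. By hypothesis \<open>u\<^sub>i\<^sub>j\<close> commutes with
  every \<open>u\<^sub>p\<^sub>q\<close> and \<open>u\<^sub>p\<^sub>'\<^sub>q\<close>. Writing \<open>u\<^sub>k\<^sub>l = (\<Sum>\<^sub>q u\<^sub>p\<^sub>q) u\<^sub>k\<^sub>l (\<Sum>\<^sub>q\<^sub>' u\<^sub>p\<^sub>'\<^sub>q\<^sub>')\<close> and inserting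
  \<open>\<Sum>\<^sub>x u\<^sub>x\<^sub>l = 1\<close> between \<open>u\<^sub>p\<^sub>q\<close> and \<open>u\<^sub>p\<^sub>'\<^sub>q\<^sub>'\<close> then gives \<open>u\<^sub>i\<^sub>j u\<^sub>k\<^sub>l u\<^sub>i\<^sub>t = 0\<close> for \<open>t \<noteq> j\<close>, so
  \<open>u\<^sub>i\<^sub>j u\<^sub>k\<^sub>l = u\<^sub>i\<^sub>j u\<^sub>k\<^sub>l u\<^sub>i\<^sub>j\<close> is self-adjoint and the two projections commute.

  The analytic input is that projections with sum \<open>1\<close> in a C*-algebra are pairwise orthogonal;
  it is derived from the C*-identity alone, with an average over roots of unity in place of
  spectral theory.\<close>

section \<open>Projections in unital C*-algebras\<close>

lemma module_scaleC: "module (scaleC :: complex \<Rightarrow> 'a::unital_cstar_algebra \<Rightarrow> 'a)"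
  by unfold_locales (simp_all add: scaleC_add_right scaleC_add_left scaleC_scaleC scaleC_one)

lemma of_real_eq_scaleC: "(of_real r :: 'a::unital_cstar_algebra) = scaleC (complex_of_real r) 1"
  by (simp add: of_real_def scaleR_scaleC)

lemma scaleC_zero_left [simp]: "scaleC 0 x = (0::'a::unital_cstar_algebra)"
  using module.scale_zero_left[OF module_scaleC] .

lemma scaleC_minus_left: "scaleC (- c) x = - scaleC c (x::'a::unital_cstar_algebra)"
  using module.scale_minus_left[OF module_scaleC] .

lemma scaleC_sum_left: "scaleC (sum f A) x = (\<Sum>i\<in>A. scaleC (f i) (x::'a::unital_cstar_algebra))"
  using module.scale_sum_left[OF module_scaleC] .

lemma scaleC_sum_right: "scaleC c (sum f A) = (\<Sum>i\<in>A. scaleC c (f i::'a::unital_cstar_algebra))"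
  using module.scale_sum_right[OF module_scaleC] .

lemma adj_one: "adj (1::'a::unital_cstar_algebra) = 1"
  by (metis adj_adj adj_mult mult_1_left)

lemma adj_additive: "additive (adj :: 'a::unital_cstar_algebra \<Rightarrow> 'a)"
  by unfold_locales (rule adj_add)

lemma adj_zero: "adj (0::'a::unital_cstar_algebra) = 0"
  using additive.zero[OF adj_additive] .

lemma adj_diff: "adj (x - y) = adj x - adj (y::'a::unital_cstar_algebra)"
  using additive.diff[OF adj_additive] .

lemma norm_selfadjoint_square: "adj x = x \<Longrightarrow> norm (x * x) = (norm (x::'a::unital_cstar_algebra))\<^sup>2"
  using cstar_identity[of x] by simp

lemma norm_projection_le_1:
  assumes "adj p = p" "p * p = p"
  shows "norm (p::'a::unital_cstar_algebra) \<le> 1"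
proof -
  have "norm p = (norm p)\<^sup>2" using norm_selfadjoint_square[OF assms(1)] assms(2) by simp
  then have "norm p = 0 \<or> norm p = 1" by (simp add: power2_eq_square)
  then show ?thesis by auto
qed

lemma le_1_if_power_2_power_bounded:
  fixes x C :: real
  assumes "0 \<le> x" "\<And>k. x ^ (2 ^ k) \<le> C"
  shows "x \<le> 1"
proof (rule ccontr)
  assume "\<not> x \<le> 1"
  then have x: "x > 1" by simp
  obtain n :: nat where n: "C < real n * (x - 1)"
    using reals_Archimedean3[of "x - 1"] x by auto
  have "real n \<le> real (2 ^ n)" by simp
  then have "real n * (x - 1) \<le> real (2 ^ n) * (x - 1)" using x by (intro mult_right_mono) auto
  also have "\<dots> < 1 + real (2 ^ n) * (x - 1)" by simp
  also have "\<dots> \<le> x ^ (2 ^ n)"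
    using Bernoulli_inequality[of "x - 1" "2 ^ n"] x by simp
  finally show False using n assms(2)[of n] by simp
qed

text \<open>If \<open>g\<close> is a projection and \<open>h\<close> a self-adjoint contraction with \<open>g h = h g = 0\<close>,
  then \<open>(g + h)\<^sup>2\<^sup>k = g + h\<^sup>2\<^sup>k\<close>, so the C*-identity gives \<open>\<parallel>g + h\<parallel>\<^sup>2\<^sup>k \<le> 2\<close> for all \<open>k\<close>.\<close>

lemma norm_add_orthogonal_le_1:
  fixes g h :: "'a::unital_cstar_algebra"
  assumes g: "adj g = g" "g * g = g"
    and h: "adj h = h" "g * h = 0" "h * g = 0" "norm h \<le> 1"
  shows "norm (g + h) \<le> 1"
proof -
  have "norm (g + h) ^ (2 ^ k) \<le> 2" if "adj h = h" "g * h = 0" "h * g = 0" "norm h \<le> 1" for k h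
    using that
  proof (induction k arbitrary: h)
    case 0
    have "norm (g + h) \<le> norm g + norm h" by (rule norm_triangle_ineq)
    also have "\<dots> \<le> 2" using norm_projection_le_1[OF g] 0 by simp
    finally show ?case by simp
  next
    case (Suc k)
    have "(g + h) * (g + h) = g + h * h"
      using Suc.prems g by (simp add: distrib_left distrib_right)
    moreover have "adj (g + h) = g + h" using Suc.prems g by (simp add: adj_add)
    ultimately have "(norm (g + h))\<^sup>2 = norm (g + h * h)"
      by (metis norm_selfadjoint_square)
    then have "norm (g + h) ^ (2 ^ Suc k) = norm (g + h * h) ^ (2 ^ k)"
      by (simp add: power_mult)
    also have "\<dots> \<le> 2"
    proof (rule Suc.IH)
      show "adj (h * h) = h * h" using Suc.prems by (simp add: adj_mult)
      show "g * (h * h) = 0" "h * h * g = 0" using Suc.prems by (simp_all add: mult.assoc[symmetric] mult.assoc)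
      have "norm (h * h) \<le> norm h * norm h" by (rule norm_mult_ineq)
      also have "\<dots> \<le> 1" using Suc.prems by (simp add: mult_le_one)
      finally show "norm (h * h) \<le> 1" .
    qed
    finally show ?case .
  qed
  then show ?thesis using h by (intro le_1_if_power_2_power_bounded[of _ 2]) auto
qed

lemma norm_one_minus_compression_le_1:
  fixes e f :: "'a::unital_cstar_algebra"
  assumes e: "adj e = e" "e * e = e" and f: "adj f = f" "f * f = f"
  shows "norm (1 - f * e * f) \<le> 1"
proof -
  have g: "adj (1 - f) = 1 - f" "(1 - f) * (1 - f) = 1 - f"
    using f by (simp_all add: adj_diff adj_one left_diff_distrib right_diff_distrib)
  have e': "adj (1 - e) = 1 - e" "(1 - e) * (1 - e) = 1 - e"
    using e by (simp_all add: adj_diff adj_one left_diff_distrib right_diff_distrib)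
  have f_orth: "(1 - f) * f = 0" "f * (1 - f) = 0"
    using f by (simp_all add: left_diff_distrib right_diff_distrib)
  let ?h = "f * (1 - e) * f"
  have "norm ((1 - f) + ?h) \<le> 1"
  proof (rule norm_add_orthogonal_le_1[OF g])
    show "adj ?h = ?h" using e' f by (simp add: adj_mult mult.assoc)
    have "(1 - f) * ?h = ((1 - f) * f) * ((1 - e) * f)" "?h * (1 - f) = (f * (1 - e)) * (f * (1 - f))"
      by (simp_all only: mult.assoc)
    then show "(1 - f) * ?h = 0" "?h * (1 - f) = 0" using f_orth by simp_all
    have "norm ?h \<le> norm (f * (1 - e)) * norm f" by (rule norm_mult_ineq)
    also have "\<dots> \<le> norm f * norm (1 - e) * norm f"
      by (intro mult_right_mono norm_mult_ineq norm_ge_zero)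
    also have "\<dots> \<le> 1"
      using norm_projection_le_1[OF f] norm_projection_le_1[OF e'] by (simp add: mult_le_one)
    finally show "norm ?h \<le> 1" .
  qed
  moreover have "?h = f * f - f * e * f" by (simp add: left_diff_distrib right_diff_distrib)
  ultimately show ?thesis using f by simp
qed

lemma adj_rotation:
  fixes a :: "'a::unital_cstar_algebra"
  assumes "adj a = a"
  shows "adj (of_real T + scaleC z a) = of_real T + scaleC (cnj z) a"
  using assms by (simp add: adj_add adj_scaleC of_real_eq_scaleC adj_one)

lemma adj_mult_self_rotation:
  fixes a :: "'a::unital_cstar_algebra"
  assumes sa: "adj a = a" and z: "cmod z = 1"
  shows "adj (of_real T + scaleC z a) * (of_real T + scaleC z a)
           = of_real (T\<^sup>2) + scaleR (2 * T * Re z) a + a * a"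
proof -
  have zz: "cnj z * z = 1" using z by (metis complex_norm_square mult.commute of_real_1 power_one)
  have "complex_of_real T * z + cnj z * complex_of_real T = complex_of_real (2 * T * Re z)"
    by (simp add: complex_eq_iff)
  then have "scaleC (complex_of_real T * z) a + scaleC (cnj z * complex_of_real T) a
      = scaleR (2 * T * Re z) a"
    by (simp add: scaleC_add_left[symmetric] scaleR_scaleC)
  moreover have "adj (of_real T + scaleC z a) * (of_real T + scaleC z a)
      = scaleC (complex_of_real T * complex_of_real T) 1
        + (scaleC (complex_of_real T * z) a + scaleC (cnj z * complex_of_real T) a)
        + scaleC (cnj z * z) (a * a)"
    unfolding adj_rotation[OF sa]
    by (simp add: of_real_eq_scaleC distrib_left distrib_right mult_scaleC_left mult_scaleC_right
        scaleC_scaleC scaleC_add_right add_ac mult_ac)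
  ultimately show ?thesis
    by (simp add: zz scaleC_one of_real_eq_scaleC power2_eq_square)
qed

text \<open>For \<open>|z| = 1\<close>, \<open>(T + z a)\<^sup>* (T + z a)\<close> is the convex combination of the cases \<open>z = \<plusminus>1\<close>
  with weights \<open>(1 \<plusminus> Re z) / 2\<close>.\<close>

lemma norm_rotation_le:
  fixes a :: "'a::unital_cstar_algebra"
  assumes sa: "adj a = a" and T: "0 \<le> T"
    and plus: "norm (of_real T + a) \<le> T" and minus: "norm (of_real T - a) \<le> T"
    and z: "cmod z = 1"
  shows "norm (of_real T + scaleC z a) \<le> T"
proof -
  define c where "c = Re z"
  have c: "-1 \<le> c" "c \<le> 1" using abs_Re_le_cmod[of z] z unfolding c_def by auto
  define sq where "sq w = adj (of_real T + scaleC w a) * (of_real T + scaleC w a)" for w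
  have sq_plus: "norm (sq 1) \<le> T\<^sup>2" and sq_minus: "norm (sq (-1)) \<le> T\<^sup>2"
    using cstar_identity[of "of_real T + scaleC 1 a"] cstar_identity[of "of_real T + scaleC (-1) a"]
      plus minus T scaleC_one[of a] scaleC_minus_left[of 1 a]
    by (simp_all add: sq_def power_mono)
  define x y where "x = of_real (T\<^sup>2) + a * a" and "y = scaleR (2 * T) a"
  have "sq w = x + scaleR (Re w) y" if "cmod w = 1" for w
    using adj_mult_self_rotation[OF sa that] by (simp add: sq_def x_def y_def algebra_simps)
  moreover have "scaleR ((1 + c) / 2) (x + y) + scaleR ((1 - c) / 2) (x - y)
      = scaleR ((1 + c) / 2 + (1 - c) / 2) x + scaleR ((1 + c) / 2 - (1 - c) / 2) y"
    by (simp add: algebra_simps)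
  moreover have "(1 + c) / 2 + (1 - c) / 2 = 1" "(1 + c) / 2 - (1 - c) / 2 = c"
    by (simp_all add: field_simps)
  ultimately have "sq z = scaleR ((1 + c) / 2) (sq 1) + scaleR ((1 - c) / 2) (sq (-1))"
    using z by (simp add: c_def)
  then have "norm (sq z) = norm (scaleR ((1 + c) / 2) (sq 1) + scaleR ((1 - c) / 2) (sq (-1)))"
    by simp
  also have "\<dots> \<le> ((1 + c) / 2) * norm (sq 1) + ((1 - c) / 2) * norm (sq (-1))"
    using c by (intro order_trans[OF norm_triangle_ineq] add_mono) simp_all
  also have "\<dots> \<le> ((1 + c) / 2) * T\<^sup>2 + ((1 - c) / 2) * T\<^sup>2"
    using c sq_plus sq_minus by (intro add_mono mult_left_mono) auto
  also have "\<dots> = T\<^sup>2" by (simp add: field_simps)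
  finally have "(norm (of_real T + scaleC z a))\<^sup>2 \<le> T\<^sup>2"
    by (simp add: sq_def cstar_identity)
  then show ?thesis using T by (rule power2_le_imp_le)
qed

lemma power_of_real_add_scaleC:
  fixes a :: "'a::unital_cstar_algebra"
  shows "(of_real T + scaleC z a) ^ n =
    (\<Sum>j\<le>n. scaleC (of_nat (n choose j) * complex_of_real T ^ (n - j) * z ^ j) (a ^ j))"
proof (induction n)
  case 0
  then show ?case by (simp add: scaleC_one)
next
  case (Suc n)
  define c where "c j = of_nat (n choose j) * complex_of_real T ^ (n - j) * z ^ j" for j
  define g where "g j = scaleC (complex_of_real T * c j) (a ^ j)" for j
  define h where "h j = scaleC (z * c j) (a ^ Suc j)" for j
  define f where "f j = scaleC (of_nat (Suc n choose j) * complex_of_real T ^ (Suc n - j) * z ^ j) (a ^ j)" for j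
  have f_Suc: "f (Suc j) = g (Suc j) + h j" if "j \<le> n" for j
  proof (cases "j = n")
    case True
    then show ?thesis by (simp add: f_def g_def h_def c_def scaleC_add_left[symmetric] binomial_eq_0)
  next
    case False
    then have pw: "complex_of_real T * complex_of_real T ^ (n - Suc j) = complex_of_real T ^ (n - j)"
      using that by (metis Suc_diff_Suc le_neq_implies_less power_Suc)
    have "f (Suc j) = scaleC (of_nat (n choose Suc j) * complex_of_real T ^ (n - j) * z ^ Suc j
        + z * c j) (a ^ Suc j)"
      unfolding f_def c_def by (simp add: algebra_simps)
    also have "\<dots> = g (Suc j) + h j"
      unfolding g_def h_def scaleC_add_left[symmetric] c_def
      by (simp only: pw[symmetric]) (simp add: algebra_simps)
    finally show ?thesis .
  qed
  have "(of_real T + scaleC z a) ^ Suc n = (of_real T + scaleC z a) * (\<Sum>j\<le>n. scaleC (c j) (a ^ j))"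
    using Suc.IH by (simp add: c_def)
  also have "\<dots> = (\<Sum>j\<le>n. g j) + (\<Sum>j\<le>n. h j)"
    by (simp add: g_def h_def distrib_right sum_distrib_left sum.distrib of_real_eq_scaleC
         mult_scaleC_left mult_scaleC_right scaleC_scaleC scaleC_add_right mult.commute)
  also have "(\<Sum>j\<le>n. g j) = (\<Sum>j\<le>Suc n. g j)"
    by (simp add: g_def c_def binomial_eq_0)
  also have "\<dots> = g 0 + (\<Sum>j\<le>n. g (Suc j))"
    by (rule sum.atMost_Suc_shift)
  also have "g 0 + (\<Sum>j\<le>n. g (Suc j)) + (\<Sum>j\<le>n. h j) = f 0 + (\<Sum>j\<le>n. f (Suc j))"
    using f_Suc by (simp add: sum.distrib f_def g_def c_def add_ac)
  also have "\<dots> = (\<Sum>j\<le>Suc n. f j)"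
    by (rule sum.atMost_Suc_shift[symmetric])
  finally show ?case by (simp add: f_def)
qed

lemma root_of_unity_power_eq_1_iff:
  assumes "0 < N"
  shows "cis (2 * pi / real N) ^ m = 1 \<longleftrightarrow> N dvd m"
proof -
  define w where "w = cis (2 * pi / real N)"
  have wN: "w ^ N = 1" using assms by (simp add: w_def DeMoivre)
  have "w ^ m = w ^ (N * (m div N) + m mod N)" by simp
  also have "\<dots> = (w ^ N) ^ (m div N) * w ^ (m mod N)" by (simp only: power_add power_mult)
  also have "\<dots> = w ^ (m mod N)" by (simp add: wN)
  also have "\<dots> = cis (2 * pi * real (m mod N) / real N)"
    by (simp add: w_def DeMoivre mult_ac)
  finally have "w ^ m = cis (2 * pi * real (m mod N) / real N)" .
  moreover have "inj_on (\<lambda>k. cis (2 * pi * real k / real N)) {..<N}"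
    using bij_betw_roots_unity[OF assms] by (simp add: bij_betw_def)
  then have "cis (2 * pi * real (m mod N) / real N) = cis (2 * pi * real 0 / real N) \<longleftrightarrow> m mod N = 0"
    using assms by (intro inj_on_eq_iff) auto
  ultimately show ?thesis by (simp add: w_def dvd_eq_mod_eq_0)
qed

lemma sum_powers_root_of_unity:
  assumes "0 < N"
  shows "(\<Sum>k<N. (cis (2 * pi / real N) ^ m) ^ k) = (if N dvd m then of_nat N else 0)"
proof -
  have "cis (2 * pi / real N) ^ N = 1"
    using assms by (simp add: DeMoivre)
  then have "(cis (2 * pi / real N) ^ m) ^ N = 1"
    by (metis power_mult mult.commute power_one)
  then show ?thesis
    using root_of_unity_power_eq_1_iff[OF assms] by (auto simp: sum_gp_strict)
qed

text \<open>Averaging over the \<open>(n + 1)\<close>-st roots of unity \<open>w\<^sup>k\<close> isolates the linear term of the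
  binomial expansion of \<open>(T + w\<^sup>k a)\<^sup>n\<close>.\<close>

lemma sum_rotated_powers:
  fixes a :: "'a::unital_cstar_algebra"
  assumes n: "1 \<le> n"
  defines "w \<equiv> cis (2 * pi / real (Suc n))"
  shows "(\<Sum>k<Suc n. scaleC ((w ^ k) ^ n) ((of_real T + scaleC (w ^ k) a) ^ n)) =
     scaleC (of_nat (Suc n) * of_nat n * complex_of_real T ^ (n - 1)) a"
proof -
  define C where "C j = of_nat (n choose j) * complex_of_real T ^ (n - j)" for j
  have "(\<Sum>k<Suc n. scaleC ((w ^ k) ^ n) ((of_real T + scaleC (w ^ k) a) ^ n)) =
      (\<Sum>k<Suc n. \<Sum>j\<le>n. scaleC (C j * (w ^ (n + j)) ^ k) (a ^ j))"
  proof (intro sum.cong refl)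
    fix k
    have "(w ^ k) ^ n * (C j * (w ^ k) ^ j) = C j * (w ^ (k * n) * w ^ (k * j))" for j
      by (simp add: power_mult[symmetric] mult_ac)
    also have "\<dots> j = C j * (w ^ (n + j)) ^ k" for j
      by (simp add: power_add[symmetric] power_mult[symmetric] algebra_simps)
    finally have coef: "(w ^ k) ^ n * (C j * (w ^ k) ^ j) = C j * (w ^ (n + j)) ^ k" for j .
    then show "scaleC ((w ^ k) ^ n) ((of_real T + scaleC (w ^ k) a) ^ n) =
      (\<Sum>j\<le>n. scaleC (C j * (w ^ (n + j)) ^ k) (a ^ j))"
      unfolding power_of_real_add_scaleC scaleC_sum_right scaleC_scaleC
      by (intro sum.cong refl) (metis (no_types) C_def coef mult.assoc)
  qed
  also have "\<dots> = (\<Sum>j\<le>n. scaleC (C j * (\<Sum>k<Suc n. (w ^ (n + j)) ^ k)) (a ^ j))"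
    by (subst sum.swap) (simp add: scaleC_sum_left sum_distrib_left del: sum.lessThan_Suc)
  also have "\<dots> = (\<Sum>j\<le>n. if j = 1 then scaleC (C 1 * of_nat (Suc n)) a else 0)"
  proof (intro sum.cong refl)
    fix j assume "j \<in> {..n}"
    then have j: "j \<le> n" by simp
    have "Suc n dvd (n + j) \<longleftrightarrow> j = 1"
    proof
      assume "Suc n dvd (n + j)"
      then obtain q where q: "n + j = Suc n * q" ..
      then have "0 < Suc n * q" "Suc n * q < Suc n * 2" using n j unfolding q[symmetric] by simp_all
      then have "0 < q" "q < 2" by (simp_all only: mult_less_cancel1 nat_0_less_mult_iff)
      then have "q = 1" by simp
      then show "j = 1" using q by simp
    qed simp
    then show "scaleC (C j * (\<Sum>k<Suc n. (w ^ (n + j)) ^ k)) (a ^ j) =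
        (if j = 1 then scaleC (C 1 * of_nat (Suc n)) a else 0)"
      unfolding w_def sum_powers_root_of_unity[OF zero_less_Suc] by simp
  qed
  also have "\<dots> = scaleC (C 1 * of_nat (Suc n)) a"
    using n by (simp add: sum.delta)
  finally show ?thesis by (simp add: C_def mult_ac)
qed

lemma norm_selfadjoint_mult_le:
  fixes a :: "'a::unital_cstar_algebra"
  assumes sa: "adj a = a" and T: "0 < T"
    and plus: "norm (of_real T + a) \<le> T" and minus: "norm (of_real T - a) \<le> T"
    and n: "1 \<le> n"
  shows "real n * norm a \<le> T"
proof -
  define w where "w = cis (2 * pi / real (Suc n))"
  define S where "S = (\<Sum>k<Suc n. scaleC ((w ^ k) ^ n) ((of_real T + scaleC (w ^ k) a) ^ n))"
  have "norm S \<le> (\<Sum>k<Suc n. norm (scaleC ((w ^ k) ^ n) ((of_real T + scaleC (w ^ k) a) ^ n)))"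
    unfolding S_def by (rule norm_sum)
  also have "\<dots> \<le> (\<Sum>k<Suc n. T ^ n)"
  proof (rule sum_mono)
    fix k
    have wk: "cmod (w ^ k) = 1" by (simp add: w_def norm_power)
    have "norm (scaleC ((w ^ k) ^ n) ((of_real T + scaleC (w ^ k) a) ^ n))
        = norm ((of_real T + scaleC (w ^ k) a) ^ n)"
      by (simp add: norm_scaleC norm_power w_def)
    also have "\<dots> \<le> norm (of_real T + scaleC (w ^ k) a) ^ n" by (rule norm_power_ineq)
    also have "\<dots> \<le> T ^ n"
      using norm_rotation_le[OF sa _ plus minus wk] T by (intro power_mono) auto
    finally show "norm (scaleC ((w ^ k) ^ n) ((of_real T + scaleC (w ^ k) a) ^ n)) \<le> T ^ n" .
  qed
  finally have "norm S \<le> real (Suc n) * T ^ n" by simp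
  moreover have "S = scaleC (of_nat (Suc n) * of_nat n * complex_of_real T ^ (n - 1)) a"
    unfolding S_def w_def by (rule sum_rotated_powers[OF n])
  then have "norm S = real (Suc n) * (T ^ (n - 1) * (real n * norm a))"
    using T by (simp add: norm_scaleC norm_mult norm_power del: of_nat_Suc)
  moreover have "T ^ n = T ^ (n - 1) * T" using n by (simp add: power_eq_if)
  ultimately have "T ^ (n - 1) * (real n * norm a) \<le> T ^ (n - 1) * T"
    by (simp del: of_nat_Suc)
  then show ?thesis using T by (simp add: mult_le_cancel_left)
qed

text \<open>Without spectral theory: \<open>\<parallel>T \<plusminus> a\<parallel> \<le> T\<close> says that the spectrum of \<open>a\<close> is \<open>{0}\<close>;
  the bound \<open>n\<parallel>a\<parallel> \<le> T\<close> for all \<open>n\<close> replaces the equality of norm and spectral radius.\<close>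

lemma selfadjoint_eq_0_if_norm_add_diff_le:
  fixes a :: "'a::unital_cstar_algebra"
  assumes "adj a = a" "0 < T" "norm (of_real T + a) \<le> T" "norm (of_real T - a) \<le> T"
  shows "a = 0"
proof (rule ccontr)
  assume "a \<noteq> 0"
  then have a: "0 < norm a" by simp
  obtain n :: nat where n: "T / norm a < real n" using reals_Archimedean2 by blast
  then have "1 \<le> n" using assms(2) a by (cases n) (auto simp: divide_less_0_iff)
  then have "real n * norm a \<le> T" by (rule norm_selfadjoint_mult_le[OF assms])
  with n a show False by (simp add: divide_less_eq)
qed

lemma eq_0_if_sum_eq_0_norm_one_minus_le_1:
  fixes a :: "'i \<Rightarrow> 'a::unital_cstar_algebra"
  assumes S: "finite S" "t \<in> S"
    and sa: "\<And>l. l \<in> S \<Longrightarrow> adj (a l) = a l"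
    and contr: "\<And>l. l \<in> S \<Longrightarrow> norm (1 - a l) \<le> 1"
    and sum: "(\<Sum>l\<in>S. a l) = 0"
  shows "a t = 0"
proof -
  define R where "R = S - {t}"
  define T where "T = real (card R) + 1"
  have sum_R: "(\<Sum>l\<in>R. a l) = - a t"
    using sum S by (simp add: R_def sum.remove eq_neg_iff_add_eq_0 add.commute)
  have "of_real T - a t = of_real (real (card R)) + (1 - a t)" by (simp add: T_def)
  then have "norm (of_real T - a t) \<le> norm (of_real (real (card R)) :: 'a) + norm (1 - a t)"
    by (metis norm_triangle_ineq)
  also have "\<dots> \<le> T" using contr[OF S(2)] by (simp add: T_def)
  finally have minus: "norm (of_real T - a t) \<le> T" .
  have "of_real T + a t = 1 + (\<Sum>l\<in>R. 1 - a l)"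
    by (simp add: T_def sum_subtractf sum_R)
  then have "norm (of_real T + a t) \<le> norm (1::'a) + norm (\<Sum>l\<in>R. 1 - a l)"
    by (metis norm_triangle_ineq)
  also have "\<dots> \<le> 1 + (\<Sum>l\<in>R. norm (1 - a l))" by (simp add: norm_sum)
  also have "\<dots> \<le> T"
    using sum_mono[of R "\<lambda>l. norm (1 - a l)" "\<lambda>_. 1"] contr by (simp add: T_def R_def)
  finally have plus: "norm (of_real T + a t) \<le> T" .
  show ?thesis
    by (rule selfadjoint_eq_0_if_norm_add_diff_le[OF sa[OF S(2)] _ plus minus]) (simp add: T_def)
qed

text \<open>With \<open>f = e j\<close>, the compressions \<open>f e\<^sub>l f\<close> (\<open>l \<noteq> j\<close>) sum to \<open>0\<close>, so \<open>f e\<^sub>t f = (e\<^sub>t f)\<^sup>* (e\<^sub>t f)\<close> vanishes.\<close>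

lemma projections_sum_1_orthogonal:
  fixes e :: "'i::finite \<Rightarrow> 'a::unital_cstar_algebra"
  assumes proj: "\<And>l. adj (e l) = e l" "\<And>l. e l * e l = e l"
    and sum: "(\<Sum>l\<in>UNIV. e l) = 1" and jt: "j \<noteq> t"
  shows "e j * e t = 0"
proof -
  define f where "f = e j"
  have f: "adj f = f" "f * f = f" using proj by (simp_all add: f_def)
  have "(\<Sum>l\<in>UNIV. f * e l * f) = f * (\<Sum>l\<in>UNIV. e l) * f"
    by (simp add: sum_distrib_left sum_distrib_right)
  also have "\<dots> = f * e j * f" using sum f by (simp add: f_def)
  finally have "(\<Sum>l\<in>UNIV - {j}. f * e l * f) = 0"
    by (simp add: sum.remove[of UNIV j])
  then have "f * e t * f = 0"
  proof (rule eq_0_if_sum_eq_0_norm_one_minus_le_1[where a = "\<lambda>l. f * e l * f", rotated -1])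
    show "finite (UNIV - {j})" "t \<in> UNIV - {j}" using jt by simp_all
    show "adj (f * e l * f) = f * e l * f" for l using proj f by (simp add: adj_mult mult.assoc)
    show "norm (1 - f * e l * f) \<le> 1" for l by (rule norm_one_minus_compression_le_1[OF proj(1,2) f])
  qed
  moreover have "adj (e t * f) * (e t * f) = f * (e t * e t) * f"
    by (simp only: adj_mult proj(1) f(1) mult.assoc)
  ultimately have "e t * f = 0" using cstar_identity[of "e t * f"] proj(2) by simp
  then have "adj (e t * f) = 0" by (simp add: adj_zero)
  then show ?thesis using proj f by (simp add: adj_mult f_def)
qed

section \<open>Graph distance\<close>

lemma relpowp_symmetric:
  assumes sym: "\<And>v w. E v w \<Longrightarrow> E w v"
  shows "(E ^^ n) v w \<Longrightarrow> (E ^^ n) w v"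
proof (induction n arbitrary: v w)
  case (Suc n)
  from Suc.prems obtain y where "(E ^^ n) v y" "E y w" by (rule relpowp_Suc_E)
  then show ?case using Suc.IH sym by (metis relpowp_Suc_I2)
qed simp

lemma relpowp_gdist: "connected_graph E \<Longrightarrow> (E ^^ gdist E v w) v w"
  unfolding gdist_def connected_graph_def by (meson LeastI_ex)

lemma gdist_le: "(E ^^ n) v w \<Longrightarrow> gdist E v w \<le> n"
  unfolding gdist_def by (rule Least_le)

lemma not_relpowp_less_gdist: "n < gdist E v w \<Longrightarrow> \<not> (E ^^ n) v w"
  unfolding gdist_def by (rule not_less_Least)

lemma gdist_self: "gdist E v v = 0"
  using gdist_le[of 0 E v v] by simp

lemma gdist_commute:
  assumes "simple_graph E" "connected_graph E"
  shows "gdist E v w = gdist E w v"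
proof -
  have "gdist E w v \<le> gdist E v w" for v w
    using assms relpowp_symmetric[of E, OF _ relpowp_gdist[OF assms(2), of v w]]
    by (intro gdist_le) (auto simp: simple_graph_def)
  then show ?thesis by (metis le_antisym)
qed

lemma gdist_eq_0_iff: "connected_graph E \<Longrightarrow> gdist E v w = 0 \<longleftrightarrow> v = w"
  using relpowp_gdist[of E v w] gdist_self[of E v] by auto

lemma gdist_eq_1_iff:
  assumes "simple_graph E" "connected_graph E"
  shows "gdist E v w = 1 \<longleftrightarrow> E v w"
proof
  assume "gdist E v w = 1"
  then show "E v w" using relpowp_gdist[OF assms(2), of v w] by (metis relpowp_1)
next
  assume e: "E v w"
  then have "gdist E v w \<noteq> 0" using assms by (auto simp: gdist_eq_0_iff simple_graph_def)
  moreover have "gdist E v w \<le> 1" using e by (metis relpowp_1 gdist_le)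
  ultimately show "gdist E v w = 1" by simp
qed

lemma gdist_eq_2:
  assumes "simple_graph E" "connected_graph E" "E v x" "E x w" "v \<noteq> w" "\<not> E v w"
  shows "gdist E v w = 2"
proof -
  have "(E ^^ 2) v w" using assms(3,4) by (auto simp: numeral_2_eq_2 relpowp_Suc_I2)
  then have "gdist E v w \<le> 2" by (rule gdist_le)
  then show ?thesis using assms gdist_eq_0_iff[of E v w] gdist_eq_1_iff[of E v w] by linarith
qed

section \<open>Common neighbours in distance-regular graphs\<close>

lemma card_common_neighbours_adjacent:
  assumes drg: "distance_regular E D b c" and D: "2 \<le> D" and pp': "E p p'"
  shows "card {x. E p x \<and> E p' x} + b 1 + 1 = b 0"
proof -
  have simple: "simple_graph E" and con: "connected_graph E"
    and bcond: "\<And>v w i. i < D \<Longrightarrow> gdist E v w = i \<Longrightarrow> card {x. E w x \<and> gdist E v x = i + 1} = b i"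
    using drg unfolding distance_regular_def by blast+
  have sym: "\<And>v w. E v w \<Longrightarrow> E w v" and irrefl: "\<And>v. \<not> E v v"
    using simple by (auto simp: simple_graph_def)
  have d1: "\<And>v w. gdist E v w = 1 \<longleftrightarrow> E v w" by (rule gdist_eq_1_iff[OF simple con])
  define C B where "C = {x. E p x \<and> E p' x}" and "B = {x. E p' x \<and> gdist E p x = 2}"
  have "card {x. E p' x} = b 0"
    using bcond[of 0 p' p'] D gdist_self[of E p'] d1 by simp
  moreover have "card B = b 1"
    using bcond[of 1 p p'] D pp' d1 by (simp add: B_def numeral_2_eq_2)
  moreover have "{x. E p' x} = insert p (C \<union> B)"
  proof (intro set_eqI iffI)
    fix x assume "x \<in> {x. E p' x}"
    then have x: "E p' x" by simp
    have "(E ^^ 2) p x" using pp' x by (auto simp: numeral_2_eq_2 relpowp_Suc_I2)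
    then have "gdist E p x \<le> 2" by (rule gdist_le)
    then have "gdist E p x = 0 \<or> gdist E p x = 1 \<or> gdist E p x = 2" by auto
    then show "x \<in> insert p (C \<union> B)"
      using x d1 gdist_eq_0_iff[OF con] by (auto simp: C_def B_def)
  qed (use pp' sym in \<open>auto simp: C_def B_def\<close>)
  moreover have "p \<notin> C \<union> B" "C \<inter> B = {}"
    using irrefl gdist_self[of E p] d1[THEN iffD2] by (fastforce simp: C_def B_def)+
  ultimately show ?thesis
    by (simp add: card_Un_disjoint C_def[symmetric])
qed

lemma card_common_neighbours_gdist_2:
  assumes drg: "distance_regular E D b c" and D: "2 \<le> D" and pp': "gdist E p p' = 2"
  shows "card {x. E p x \<and> E p' x} = c 2"
proof -
  have simple: "simple_graph E" and con: "connected_graph E"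
    and ccond: "\<And>v w i. 1 \<le> i \<Longrightarrow> i \<le> D \<Longrightarrow> gdist E v w = i \<Longrightarrow>
      card {x. E w x \<and> gdist E v x = i - 1} = c i"
    using drg unfolding distance_regular_def by blast+
  have "{x. E p' x \<and> gdist E p x = 2 - 1} = {x. E p x \<and> E p' x}"
    using gdist_eq_1_iff[OF simple con] by auto
  with ccond[OF _ D pp'] show ?thesis by simp
qed

text \<open>This is where the hypotheses on the intersection array enter; \<open>i\<close> is a common neighbour
  of \<open>p\<close> and \<open>p'\<close> only when \<open>m = 2\<close>.\<close>

lemma common_neighbours_subset:
  assumes drg: "distance_regular E D b c" and m: "2 \<le> m" "m \<le> D"
    and cases: "(c 2 = 1 \<and> b 1 + 1 = b 0) \<or> (c 2 = 1 \<and> b 1 + 2 = b 0)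
                \<or> (c 2 = 2 \<and> m = 2 \<and> b 1 + 3 = b 0)"
    and k: "gdist E i k = m"
    and p: "E k p" "gdist E i p = m - 1" and p': "E k p'" "gdist E i p' = m - 1" "p \<noteq> p'"
  shows "{x. E p x \<and> E p' x} \<subseteq> {k, i}"
proof -
  have simple: "simple_graph E" and con: "connected_graph E"
    using drg unfolding distance_regular_def by blast+
  have sym: "\<And>v w. E v w \<Longrightarrow> E w v" using simple by (simp add: simple_graph_def)
  have d1: "\<And>v w. gdist E v w = 1 \<longleftrightarrow> E v w" by (rule gdist_eq_1_iff[OF simple con])
  define C where "C = {x. E p x \<and> E p' x}"
  define K where "K = {k, i} \<inter> C"
  have kC: "k \<in> C" using p p' sym by (simp add: C_def)
  have card_C: "card C + b 1 + 1 = b 0" if "E p p'"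
    using card_common_neighbours_adjacent[OF drg _ that] m by (simp add: C_def)
  have "gdist E p p' = 2" if "\<not> E p p'"
    using gdist_eq_2[OF simple con sym[OF p(1)] p'(1) p'(3) that] .
  then have card_C': "card C = c 2" if "\<not> E p p'"
    using card_common_neighbours_gdist_2[OF drg] m that by (simp add: C_def)
  have "card C \<le> card K"
  proof (cases "c 2 = 1")
    case True
    then have "card C \<le> 1" using cases card_C card_C' by (cases "E p p'") auto
    moreover have "1 \<le> card K" using kC by (simp add: K_def Suc_le_eq card_gt_0_iff)
    ultimately show ?thesis by simp
  next
    case False
    then have m2: "m = 2" and "card C = 2"
      using cases card_C card_C' by (cases "E p p'"; auto)+
    moreover have "i \<in> C" using p p' m2 d1 sym by (simp add: C_def)
    moreover have "k \<noteq> i" using k m gdist_self[of E i] by auto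
    ultimately show ?thesis using kC by (simp add: K_def)
  qed
  then have "K = C" by (intro card_seteq) (auto simp: K_def C_def)
  then show ?thesis by (auto simp: K_def C_def)
qed

section \<open>Magic unitaries of a graph\<close>

lemma qaut_adj: "qaut_relations E u \<Longrightarrow> adj (u i j) = u i j"
  and qaut_row_sum: "qaut_relations E u \<Longrightarrow> (\<Sum>l\<in>UNIV. u i l) = 1"
  and qaut_col_sum: "qaut_relations E u \<Longrightarrow> (\<Sum>l\<in>UNIV. u l i) = 1"
  and qaut_mult_eq_0: "qaut_relations E u \<Longrightarrow> E i k \<noteq> E j l \<Longrightarrow> u i j * u k l = 0"
  by (simp_all add: qaut_relations_def)

lemma qaut_relations_transpose: "qaut_relations E u \<Longrightarrow> qaut_relations E (\<lambda>i j. u j i)"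
  unfolding qaut_relations_def by metis

lemma qaut_row_orthogonal: "qaut_relations E u \<Longrightarrow> j \<noteq> t \<Longrightarrow> u i j * u i t = 0"
  by (rule projections_sum_1_orthogonal[of "u i"]) (simp_all add: qaut_relations_def)

lemma qaut_mult_eq_0_if_relpowp:
  fixes u :: "'v::finite \<Rightarrow> 'v \<Rightarrow> 'a::unital_cstar_algebra"
  assumes rel: "qaut_relations E u"
  shows "(E ^^ n) i p \<Longrightarrow> \<not> (E ^^ n) j q \<Longrightarrow> u i j * u p q = 0"
proof (induction n arbitrary: p q)
  case 0
  then show ?case using qaut_row_orthogonal[OF rel] by simp
next
  case (Suc n)
  from Suc.prems(1) obtain x where x: "(E ^^ n) i x" "E x p" by (rule relpowp_Suc_E)
  have "u i j * u p q = u i j * (\<Sum>y\<in>UNIV. u x y) * u p q" using qaut_row_sum[OF rel] by simp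
  also have "\<dots> = (\<Sum>y\<in>UNIV. u i j * u x y * u p q)"
    by (simp add: sum_distrib_left sum_distrib_right)
  also have "\<dots> = 0"
  proof (intro sum.neutral ballI)
    fix y
    show "u i j * u x y * u p q = 0"
    proof (cases "(E ^^ n) j y")
      case True
      then have "\<not> E y q" using Suc.prems(2) relpowp_Suc_I by metis
      then have "u x y * u p q = 0" using qaut_mult_eq_0[OF rel, of x p y q] x(2) by simp
      then show ?thesis by (simp add: mult.assoc)
    next
      case False
      then show ?thesis using Suc.IH[OF x(1)] by simp
    qed
  qed
  finally show ?case .
qed

lemma qaut_mult_eq_0_if_gdist_neq:
  fixes u :: "'v::finite \<Rightarrow> 'v \<Rightarrow> 'a::unital_cstar_algebra"
  assumes rel: "qaut_relations E u" and con: "connected_graph E"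
    and ne: "gdist E i p \<noteq> gdist E j q"
  shows "u i j * u p q = 0"
proof (cases "gdist E i p < gdist E j q")
  case True
  then show ?thesis
    by (rule qaut_mult_eq_0_if_relpowp[OF rel relpowp_gdist[OF con] not_relpowp_less_gdist])
next
  case False
  then have "gdist E j q < gdist E i p" using ne by simp
  then show ?thesis
    using qaut_mult_eq_0_if_relpowp[OF qaut_relations_transpose[OF rel] relpowp_gdist[OF con]
        not_relpowp_less_gdist] by simp
qed

lemma qaut_commute_if_gdist_eq:
  fixes u :: "'v::finite \<Rightarrow> 'v \<Rightarrow> 'a::unital_cstar_algebra"
  assumes rel: "qaut_relations E u" and simple: "simple_graph E" and con: "connected_graph E"
    and comm: "\<And>i j k l. gdist E i k = r \<Longrightarrow> gdist E j l = r \<Longrightarrow> u i j * u k l = u k l * u i j"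
    and ip: "gdist E i p = r"
  shows "u i j * u p q = u p q * u i j"
proof (cases "gdist E j q = r")
  case True
  then show ?thesis using comm ip by blast
next
  case False
  then have "u i j * u p q = 0" "u p q * u i j = 0"
    using ip qaut_mult_eq_0_if_gdist_neq[OF rel con] gdist_commute[OF simple con] by metis+
  then show ?thesis by simp
qed

lemma commute_if_mult_mult_eq:
  fixes e f :: "'a::unital_cstar_algebra"
  assumes "adj e = e" "adj f = f" "e * f * e = e * f"
  shows "e * f = f * e"
proof -
  have "adj (e * f * e) = e * f * e" using assms(1,2) by (simp add: adj_mult mult.assoc)
  then show ?thesis using assms by (simp add: adj_mult)
qed

text \<open>Inserting \<open>1 = \<Sum>\<^sub>x u\<^sub>x\<^sub>l\<close> between \<open>u\<^sub>p\<^sub>q\<close> and \<open>u\<^sub>p\<^sub>'\<^sub>q\<^sub>'\<close>, relation (R3) kills every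
  term with \<open>x\<close> not a common neighbour of \<open>p\<close> and \<open>p'\<close>.\<close>

lemma qaut_mult_through_common_neighbours:
  fixes u :: "'v::finite \<Rightarrow> 'v \<Rightarrow> 'a::unital_cstar_algebra"
  assumes rel: "qaut_relations E u" and ql: "E q l" "E l q'" and ki: "k \<noteq> i"
    and common: "\<And>x. E p x \<Longrightarrow> E x p' \<Longrightarrow> x = k \<or> x = i"
  shows "u p q * u p' q' = u p q * u k l * u p' q' + u p q * u i l * u p' q'"
proof -
  have "u p q * u p' q' = u p q * (\<Sum>x\<in>UNIV. u x l) * u p' q'" using qaut_col_sum[OF rel] by simp
  also have "\<dots> = (\<Sum>x\<in>UNIV. u p q * u x l * u p' q')"
    by (simp add: sum_distrib_left sum_distrib_right)
  also have "\<dots> = (\<Sum>x\<in>{k, i}. u p q * u x l * u p' q')"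
  proof (rule sum.mono_neutral_right)
    show "\<forall>x\<in>UNIV - {k, i}. u p q * u x l * u p' q' = 0"
    proof
      fix x assume "x \<in> UNIV - {k, i}"
      then consider "\<not> E p x" | "\<not> E x p'" using common by blast
      then show "u p q * u x l * u p' q' = 0"
      proof cases
        case 1
        then show ?thesis using qaut_mult_eq_0[OF rel, of p x q l] ql by simp
      next
        case 2
        then show ?thesis using qaut_mult_eq_0[OF rel, of x p' l q'] ql by (simp add: mult.assoc)
      qed
    qed
  qed auto
  also have "\<dots> = u p q * u k l * u p' q' + u p q * u i l * u p' q'" using ki by simp
  finally show ?thesis .
qed

lemma qaut_mult_mult_row_eq_0:
  fixes u :: "'v::finite \<Rightarrow> 'v \<Rightarrow> 'a::unital_cstar_algebra"
  assumes rel: "qaut_relations E u" and pk: "E p k" "E k p'" and ki: "k \<noteq> i"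
    and common: "\<And>x. E p x \<Longrightarrow> E x p' \<Longrightarrow> x = k \<or> x = i"
    and comm: "\<And>s q. u i s * u p q = u p q * u i s" "\<And>s q. u i s * u p' q = u p' q * u i s"
    and jl: "j \<noteq> l" and jt: "j \<noteq> t"
  shows "u i j * u k l * u i t = 0"
proof -
  have term_eq_0: "u i j * (u p q * u k l * u p' q') * u i t = 0" for q q'
  proof (cases "E q l \<and> E l q'")
    case False
    then consider "\<not> E q l" | "\<not> E l q'" by blast
    then show ?thesis
    proof cases
      case 1
      then show ?thesis using qaut_mult_eq_0[OF rel, of p k q l] pk by simp
    next
      case 2
      then show ?thesis using qaut_mult_eq_0[OF rel, of k p' l q'] pk by (simp add: mult.assoc)
    qed
  next
    case True
    have sandwich: "u i j * (u p q * x * u p' q') * u i t = u p q * (u i j * x * u i t) * u p' q'" for x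
      using comm(1)[of j q] comm(2)[of t q'] by (simp add: mult.assoc) (simp add: mult.assoc[symmetric])
    have eq: "u p q * u k l * u p' q' = u p q * 1 * u p' q' - u p q * u i l * u p' q'"
      using qaut_mult_through_common_neighbours[OF rel True[THEN conjunct1] True[THEN conjunct2] ki common]
      by simp
    have "u i j * (u p q * 1 * u p' q') * u i t = 0"
      using sandwich[of 1] qaut_row_orthogonal[OF rel jt] by simp
    moreover have "u i j * (u p q * u i l * u p' q') * u i t = 0"
      using sandwich[of "u i l"] qaut_row_orthogonal[OF rel jl] by simp
    ultimately show ?thesis
      unfolding eq by (simp only: right_diff_distrib left_diff_distrib diff_zero)
  qed
  have "u i j * u k l * u i t = u i j * ((\<Sum>q\<in>UNIV. u p q) * u k l * (\<Sum>q'\<in>UNIV. u p' q')) * u i t"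
    by (simp add: qaut_row_sum[OF rel])
  also have "\<dots> = (\<Sum>q\<in>UNIV. \<Sum>q'\<in>UNIV. u i j * (u p q * u k l * u p' q') * u i t)"
    by (simp add: sum_distrib_left sum_distrib_right mult.assoc) (rule sum.swap)
  also have "\<dots> = 0" using term_eq_0 by simp
  finally show ?thesis .
qed

lemma qaut_commute_if_common_neighbours:
  fixes u :: "'v::finite \<Rightarrow> 'v \<Rightarrow> 'a::unital_cstar_algebra"
  assumes rel: "qaut_relations E u" and pk: "E p k" "E k p'" and ki: "k \<noteq> i"
    and common: "\<And>x. E p x \<Longrightarrow> E x p' \<Longrightarrow> x = k \<or> x = i"
    and comm: "\<And>s q. u i s * u p q = u p q * u i s" "\<And>s q. u i s * u p' q = u p' q * u i s"
    and jl: "j \<noteq> l"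
  shows "u i j * u k l = u k l * u i j"
proof (rule commute_if_mult_mult_eq)
  have "u i j * u k l = (\<Sum>t\<in>UNIV. u i j * u k l * u i t)"
    using qaut_row_sum[OF rel, of i] by (simp flip: sum_distrib_left)
  also have "\<dots> = u i j * u k l * u i j"
    using qaut_mult_mult_row_eq_0[OF rel pk ki common comm jl] by (simp add: sum.remove[of UNIV j])
  finally show "u i j * u k l * u i j = u i j * u k l" by simp
qed (use qaut_adj[OF rel] in simp_all)

theorem lemma3p8:
  fixes E :: "'v::finite \<Rightarrow> 'v \<Rightarrow> bool"
    and D m :: nat and b c :: "nat \<Rightarrow> nat"
    and u :: "'v \<Rightarrow> 'v \<Rightarrow> 'a::unital_cstar_algebra"
  assumes drg: "distance_regular E D b c"
    and rel: "qaut_relations E u"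
    and m: "2 \<le> m" "m \<le> D" "c m \<ge> 2"
    and comm: "\<And>i j k l. gdist E i k = m - 1 \<Longrightarrow> gdist E j l = m - 1 \<Longrightarrow>
                 u i j * u k l = u k l * u i j"
    and cases: "(c 2 = 1 \<and> b 1 + 1 = b 0) \<or> (c 2 = 1 \<and> b 1 + 2 = b 0)
                \<or> (c 2 = 2 \<and> m = 2 \<and> b 1 + 3 = b 0)"
  shows "\<And>i j k l. gdist E i k = m \<Longrightarrow> gdist E j l = m \<Longrightarrow>
                 u i j * u k l = u k l * u i j"
proof -
  fix i j k l
  assume ik: "gdist E i k = m" and jl: "gdist E j l = m"
  have simple: "simple_graph E" and con: "connected_graph E"
    and "card {x. E k x \<and> gdist E i x = m - 1} = c m"
    using drg m ik unfolding distance_regular_def by auto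
  then obtain P where "P \<subseteq> {x. E k x \<and> gdist E i x = m - 1}" "card P = 2"
    using m(3) by (metis obtain_subset_with_card_n)
  then obtain p p' where p: "E k p" "gdist E i p = m - 1" and p': "E k p'" "gdist E i p' = m - 1" "p \<noteq> p'"
    by (auto simp: card_2_iff)
  have sym: "\<And>v w. E v w \<Longrightarrow> E w v" using simple by (simp add: simple_graph_def)
  have "{x. E p x \<and> E p' x} \<subseteq> {k, i}"
    by (rule common_neighbours_subset[OF drg m(1,2) cases ik p p'])
  then have common: "\<And>x. E p x \<Longrightarrow> E x p' \<Longrightarrow> x = k \<or> x = i" using sym by blast
  have comm_row: "\<And>a s p q. gdist E a p = m - 1 \<Longrightarrow> u a s * u p q = u p q * u a s"
    by (rule qaut_commute_if_gdist_eq[OF rel simple con comm])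
  have "k \<noteq> i" "j \<noteq> l" using ik jl m gdist_self[of E] by auto
  then show "u i j * u k l = u k l * u i j"
    using qaut_commute_if_common_neighbours[OF rel sym[OF p(1)] p'(1) _ common
        comm_row[OF p(2)] comm_row[OF p'(2)]] by blast
qed

end
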